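(* Let $\varphi\colon\mathbb{D}\to\mathbb{D}$ be analytic and fix $a>0$. For $\delta,\kappa,\lambda,r>0$ (with $r$ small) set \[I(\delta,\kappa,\lambda,r)=\frac{1}{2\pi}\int_{\kappa ra-\lambda r}^{\kappa ra+\lambda r}\bigl|(C_\varphi f_{(1-r)e^{i\kappa r}})((1-\delta r)e^{it})\bigr|^2\,dt .\] (1) If $\tau_{\varphi,1}(\{1\})=a$, then $\lim_{r\to0^+}I(\delta,\kappa,\lambda,r)=\dfrac{a\,c(\delta,\lambda)}{1+\delta/a}$, where $c(\delta,\lambda)$ does not depend on $\kappa$, satisfies $0<c(\delta,\lambda)<1$, and $\lim_{\lambda\to\infty}c(\delta,\lambda)=1$ for every $\delta>0$. (2) If $\tau_{\varphi,1}(\{1\})\ne a$, then $\lim_{r\to0^+}I(\delta,\kappa,\lambda,r)=\varepsilon(\delta,\kappa,\lambda)$ exists and $\lim_{\kappa\to\infty}\varepsilon(\delta,\kappa,\lambda)=0$ for all $\delta,\lambda>0$.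
   Context: $\mathbb{D}$ is the open unit disc, $\mathbb{T}=\partial\mathbb{D}$, $P_z(\zeta)=(1-|z|^2)/|\zeta-z|^2$. For $w\in\mathbb{D}$, $f_w(z)=\sqrt{1-|w|^2}/(1-\overline{w}z)$ is the normalized reproducing kernel of $\mathcal{H}^2$, and $C_\varphi f=f\circ\varphi$. For $\alpha\in\mathbb{T}$, the Aleksandrov–Clark measure $\tau_{\varphi,\alpha}$ is the unique positive Borel measure on $\mathbb{T}$ with $\frac{1-|\varphi(z)|^2}{|\alpha-\varphi(z)|^2}=\int_{\mathbb{T}}P_z\,d\tau_{\varphi,\alpha}$ for all $z\in\mathbb{D}$. *)

theory Defs
  imports "HOL-Analysis.Analysis"
begin

definition poisson :: "complex \<Rightarrow> complex \<Rightarrow> real" where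
  "poisson z \<zeta> = (1 - (cmod z)^2) / (cmod (\<zeta> - z))^2"

definition nrk :: "complex \<Rightarrow> complex \<Rightarrow> complex" where
  "nrk w z = complex_of_real (sqrt (1 - (cmod w)^2)) / (1 - cnj w * z)"

definition comp_op :: "(complex \<Rightarrow> complex) \<Rightarrow> (complex \<Rightarrow> complex) \<Rightarrow> complex \<Rightarrow> complex" where
  "comp_op \<phi> f = f \<circ> \<phi>"

definition is_AC_measure :: "(complex \<Rightarrow> complex) \<Rightarrow> complex \<Rightarrow> complex measure \<Rightarrow> bool" where
  "is_AC_measure \<phi> \<alpha> \<mu> \<longleftrightarrow>
     sets \<mu> = sets (restrict_space borel (sphere 0 1)) \<and>
     (\<forall>z\<in>ball 0 1. ennreal ((1 - (cmod (\<phi> z))^2) / (cmod (\<alpha> - \<phi> z))^2)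
                     = (\<integral>\<^sup>+ \<zeta>. ennreal (poisson z \<zeta>) \<partial>\<mu>))"

definition I_int :: "(complex \<Rightarrow> complex) \<Rightarrow> real \<Rightarrow> real \<Rightarrow> real \<Rightarrow> real \<Rightarrow> real \<Rightarrow> real" where
  "I_int \<phi> a \<delta> \<kappa> l r =
     1 / (2 * pi) * integral {\<kappa> * r * a - l * r .. \<kappa> * r * a + l * r}
       (\<lambda>t. (cmod (comp_op \<phi> (nrk (complex_of_real (1 - r) * cis (\<kappa> * r)))
                       (complex_of_real (1 - \<delta> * r) * cis t)))^2)"

end

theory Submission
  imports Defs "HOL-Real_Asymp.Real_Asymp"
begin

text \<open>
  The Clark identity says that the Cayley transform \<open>(1 + \<phi>) / (1 - \<phi>)\<close> and the Herglotz
  integral \<open>H z = \<integral> (\<zeta> + z) / (\<zeta> - z) d\<tau>(\<zeta>)\<close> of the Clark measure \<open>\<tau>\<close> have the same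
  real part on the disc, so they differ by a constant. By dominated convergence,
  \<open>(1 - z) H z \<rightarrow> 2 \<tau>{1}\<close> as \<open>z \<rightarrow> 1\<close> inside a Stolz angle. Writing \<open>1 - cnj w \<phi>(z)\<close>
  in terms of the Cayley transform of \<open>\<phi>(z)\<close>, this gives, for \<open>w = (1 - r) exp (i \<kappa> r)\<close>,
  \<open>z = (1 - \<delta> r) exp (i (\<kappa> a + s) r)\<close> and \<open>b = \<tau>{1}\<close>,
  \<open>r \<bar>C\<^sub>\<phi> f\<^sub>w(z)\<bar>\<^sup>2 \<rightarrow> 2 b\<^sup>2 / ((b + \<delta>)\<^sup>2 + (\<kappa> (b - a) - s)\<^sup>2)\<close>
  under the uniform bound 2. After the substitution \<open>t = \<kappa> r a + r s\<close>, dominated convergence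
  turns the limit of \<open>I\<close> into the integral of this Lorentzian over \<open>[-\<lambda>, \<lambda>]\<close>, a difference
  of arctangents; for \<open>b = a\<close> it equals \<open>a c / (1 + \<delta> / a)\<close> with \<open>c = 2 / \<pi> arctan (\<lambda> / (a + \<delta>))\<close>.
\<close>

lemma Re_herglotz_kernel:
  "Re ((\<zeta> + z) / (\<zeta> - z)) = ((cmod \<zeta>)^2 - (cmod z)^2) / (cmod (\<zeta> - z))^2"
proof -
  have "Re ((\<zeta> + z) / (\<zeta> - z))
          = (Re (\<zeta> + z) * Re (\<zeta> - z) + Im (\<zeta> + z) * Im (\<zeta> - z)) / (cmod (\<zeta> - z))^2"
    by (rule Re_divide')
  also have "Re (\<zeta> + z) * Re (\<zeta> - z) + Im (\<zeta> + z) * Im (\<zeta> - z) = (cmod \<zeta>)^2 - (cmod z)^2"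
    unfolding cmod_power2 by (simp add: power2_eq_square algebra_simps)
  finally show ?thesis .
qed

lemma poisson_eq_Re_herglotz_kernel:
  "cmod \<zeta> = 1 \<Longrightarrow> poisson z \<zeta> = Re ((\<zeta> + z) / (\<zeta> - z))"
  by (simp add: Re_herglotz_kernel poisson_def norm_minus_commute)

lemma poisson_nonneg: "cmod z \<le> 1 \<Longrightarrow> 0 \<le> poisson z \<zeta>"
  by (simp add: poisson_def power_le_one)

lemma herglotz_kernel_diff_quotient:
  fixes \<zeta> y z :: complex
  assumes "\<zeta> \<noteq> y" "\<zeta> \<noteq> z" "y \<noteq> z"
  shows "((\<zeta> + y) / (\<zeta> - y) - (\<zeta> + z) / (\<zeta> - z)) / (y - z) - 2 * \<zeta> / (\<zeta> - z)^2
           = 2 * \<zeta> * (y - z) / ((\<zeta> - y) * (\<zeta> - z)^2)"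
proof -
  have "\<zeta> - y \<noteq> 0" "\<zeta> - z \<noteq> 0" "y - z \<noteq> 0"
    using assms by auto
  then show ?thesis
    by (simp add: divide_simps power2_eq_square) (simp add: algebra_simps)
qed

lemma norm_herglotz_kernel_diff_quotient_le:
  fixes \<zeta> y z :: complex
  assumes \<zeta>: "cmod \<zeta> = 1" and y: "cmod (y - z) < (1 - cmod z) / 2"
  shows "cmod (2 * \<zeta> * (y - z) / ((\<zeta> - y) * (\<zeta> - z)^2)) \<le> 4 / (1 - cmod z)^3 * cmod (y - z)"
proof -
  define d where "d = 1 - cmod z"
  have d: "d > 0"
    using y unfolding d_def by (metis norm_ge_zero order.strict_trans1 half_gt_zero_iff)
  have far: "d \<le> cmod (\<zeta> - z)" "d / 2 \<le> cmod (\<zeta> - y)"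
    using \<zeta> y norm_triangle_ineq2[of \<zeta> z] norm_triangle_ineq2[of \<zeta> y] norm_triangle_ineq2[of y z]
    by (auto simp: d_def)
  have "cmod (2 * \<zeta> * (y - z) / ((\<zeta> - y) * (\<zeta> - z)^2))
          = 2 * cmod (y - z) / (cmod (\<zeta> - y) * (cmod (\<zeta> - z))^2)"
    using \<zeta> by (simp add: norm_divide norm_mult norm_power)
  also have "\<dots> \<le> 2 * cmod (y - z) / (d / 2 * d^2)"
    using far d by (intro frac_le mult_mono power_mono) auto
  also have "\<dots> = 4 / d^3 * cmod (y - z)"
    using d by (simp add: field_simps power3_eq_cube power2_eq_square)
  finally show ?thesis
    unfolding d_def .
qed

lemma norm_herglotz_kernel_stolz_le:
  assumes "cmod \<zeta> = 1" "cmod z < 1" "cmod (1 - z) \<le> M * (1 - cmod z)"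
  shows "cmod ((1 - z) * ((\<zeta> + z) / (\<zeta> - z))) \<le> 2 * M"
proof -
  have "cmod ((1 - z) * ((\<zeta> + z) / (\<zeta> - z))) = cmod (1 - z) * cmod (\<zeta> + z) / cmod (\<zeta> - z)"
    by (simp add: norm_mult norm_divide)
  also have "\<dots> \<le> cmod (1 - z) * 2 / (1 - cmod z)"
    using assms norm_triangle_ineq[of \<zeta> z] norm_triangle_ineq2[of \<zeta> z]
    by (intro frac_le mult_left_mono) auto
  also have "\<dots> \<le> M * (1 - cmod z) * 2 / (1 - cmod z)"
    using assms by (intro divide_right_mono mult_right_mono) auto
  also have "\<dots> = 2 * M"
    using assms by simp
  finally show ?thesis .
qed

lemma tendsto_herglotz_kernel_at_1:
  assumes "z \<longlonglongrightarrow> 1" "\<And>n. z n \<noteq> 1"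
  shows "(\<lambda>n. (1 - z n) * ((\<zeta> + z n) / (\<zeta> - z n))) \<longlonglongrightarrow> complex_of_real (2 * indicator {1} \<zeta>)"
proof (cases "\<zeta> = 1")
  case True
  have "1 - z n \<noteq> 0" for n
    using assms(2)[of n] by simp
  then have "(1 - z n) * ((\<zeta> + z n) / (\<zeta> - z n)) = 1 + z n" for n
    using True by simp
  then show ?thesis
    using True tendsto_add[OF tendsto_const \<open>z \<longlonglongrightarrow> 1\<close>, of 1] by simp
next
  case False
  have "(\<lambda>n. (1 - z n) * ((\<zeta> + z n) / (\<zeta> - z n))) \<longlonglongrightarrow> (1 - 1) * ((\<zeta> + 1) / (\<zeta> - 1))"
    using False by (intro tendsto_intros \<open>z \<longlonglongrightarrow> 1\<close>) auto
  then show ?thesis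
    using False by simp
qed

lemma has_field_derivative_Re_eq_0:
  fixes f :: "complex \<Rightarrow> complex"
  assumes f': "(f has_field_derivative f') (at z)" and "open S" "z \<in> S"
    and Re_0: "\<And>w. w \<in> S \<Longrightarrow> Re (f w) = 0"
  shows "f' = 0"
proof -
  have "(f has_derivative (\<lambda>h. f' * h)) (at z)"
    using f' by (simp add: has_field_derivative_def)
  then have "((\<lambda>w. Re (f w)) has_derivative (\<lambda>h. Re (f' * h))) (at z)"
    by (rule bounded_linear.has_derivative[OF bounded_linear_Re])
  moreover have "((\<lambda>w. Re (f w)) has_derivative (\<lambda>h. 0)) (at z)"
    by (rule has_derivative_transform_within_open[OF has_derivative_const[of "0::real"]
          \<open>open S\<close> \<open>z \<in> S\<close>]) (simp add: Re_0)
  ultimately have Re_f': "(\<lambda>h. Re (f' * h)) = (\<lambda>h. 0)"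
    by (rule has_derivative_unique)
  have "Re (f' * 1) = 0" "Re (f' * \<i>) = 0"
    using fun_cong[OF Re_f', of 1] fun_cong[OF Re_f', of \<i>] by auto
  then show ?thesis by (simp add: complex_eq_iff)
qed

lemma holomorphic_Re_eq_0_imp_constant:
  assumes "f holomorphic_on S" "open S" "convex S" "\<And>w. w \<in> S \<Longrightarrow> Re (f w) = 0"
  shows "\<exists>c. \<forall>z\<in>S. f z = c"
proof (rule has_field_derivative_zero_constant[OF \<open>convex S\<close>])
  fix z assume "z \<in> S"
  then obtain f' where f': "(f has_field_derivative f') (at z)"
    using assms(1,2) holomorphic_on_open by blast
  then have "f' = 0"
    using has_field_derivative_Re_eq_0 assms(2,4) \<open>z \<in> S\<close> by blast
  then show "(f has_field_derivative 0) (at z within S)"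
    using f' by (simp add: has_field_derivative_at_within)
qed

lemma tendsto_difference_quotient_at_right:
  fixes f :: "complex \<Rightarrow> complex"
  assumes "(f has_field_derivative f') (at 0)"
  shows "((\<lambda>r::real. (f r - f 0) / r) \<longlongrightarrow> f') (at_right 0)"
proof -
  have "((\<lambda>\<rho>. (f \<rho> - f 0) / (\<rho> - 0)) \<longlongrightarrow> f') (at 0)"
    using assms by (simp add: has_field_derivative_iff)
  moreover have "filterlim complex_of_real (at 0) (at_right 0)"
    unfolding filterlim_at
    by (auto intro!: tendsto_eq_intros eventually_at_rightI[of 0 1])
  ultimately show ?thesis
    using filterlim_compose by fastforce
qed

lemma filterlim_at_right_sequentially:
  fixes S :: "nat \<Rightarrow> 'a::linorder_topology"
  assumes "\<And>n. a < S n" "S \<longlonglongrightarrow> a"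
  shows "filterlim S (at_right a) sequentially"
  using assms less_imp_neq[OF assms(1)] by (auto simp: filterlim_at intro!: always_eventually)

lemma norm_one_minus_cis_le: "cmod (1 - cis \<theta>) \<le> \<bar>\<theta>\<bar>"
proof -
  have "(cmod (1 - cis \<theta>))^2 = (1 - cos \<theta>)^2 + (sin \<theta>)^2"
    by (simp add: cmod_power2)
  also have "\<dots> = 2 - 2 * cos \<theta>"
    by (simp add: power2_diff sin_squared_eq)
  also have "\<dots> = 4 * (sin (\<theta>/2))^2"
    using cos_double_sin[of "\<theta>/2"] by simp
  also have "\<dots> \<le> 4 * (\<theta>/2)^2"
    using abs_sin_x_le_abs_x[of "\<theta>/2"] by (simp add: abs_le_square_iff[symmetric])
  also have "\<dots> = \<bar>\<theta>\<bar>^2" by (simp add: power2_eq_square)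
  finally show ?thesis
    by (rule power2_le_imp_le) simp
qed

lemma integral_rescale_interval:
  fixes f :: "real \<Rightarrow> real"
  assumes "continuous_on {c - l * r .. c + l * r} f" "r > 0" "l > 0"
  shows "integral {c - l * r .. c + l * r} f = r * integral {-l..l} (\<lambda>s. f (r * s + c))"
proof -
  have "(f has_integral integral {c - l * r .. c + l * r} f) (cbox (c - l * r) (c + l * r))"
    using integrable_continuous_real[OF assms(1)] by (simp add: has_integral_integral)
  from has_integral_affinity'[OF this \<open>r > 0\<close>, of c]
  have "((\<lambda>s. f (r * s + c)) has_integral integral {c - l * r .. c + l * r} f / r) {-l..l}"
    using assms by (simp add: cbox_interval divide_simps)
  then have "integral {-l..l} (\<lambda>s. f (r * s + c)) = integral {c - l * r .. c + l * r} f / r"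
    by (rule integral_unique)
  then show ?thesis
    using assms by simp
qed

lemma integral_Lorentzian:
  fixes A c K l :: real
  assumes "A > 0" "l > 0"
  shows "integral {-l..l} (\<lambda>s. K / (A^2 + (c - s)^2))
           = K / A * (arctan ((l - c) / A) - arctan ((- l - c) / A))"
proof -
  have "((\<lambda>s. K / (A^2 + (c - s)^2)) has_integral
          K / A * arctan ((l - c) / A) - K / A * arctan ((- l - c) / A)) {-l..l}"
  proof (rule fundamental_theorem_of_calculus)
    fix x
    have "((\<lambda>s. K / A * arctan ((s - c) / A)) has_real_derivative
            K / A * (inverse (1 + ((x - c) / A)^2) * (1 / A))) (at x)"
      using assms by (auto intro!: derivative_eq_intros)
    moreover have "K / A * (inverse (1 + ((x - c) / A)^2) * (1 / A)) = K / (A^2 + (c - x)^2)"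
      using assms by (simp add: field_simps power2_eq_square)
    ultimately show "((\<lambda>s. K / A * arctan ((s - c) / A)) has_vector_derivative
                        K / (A^2 + (c - x)^2)) (at x within {-l..l})"
      by (simp add: has_real_derivative_iff_has_vector_derivative has_vector_derivative_at_within)
  qed (use assms in simp)
  then show ?thesis
    by (simp add: integral_unique right_diff_distrib)
qed

lemma tendsto_arctan_window_0:
  assumes "A > 0" "e \<noteq> 0"
  shows "((\<lambda>k::real. arctan ((l - k * e) / A) - arctan ((- l - k * e) / A)) \<longlongrightarrow> 0) at_top"
proof -
  have pos: "((\<lambda>k::real. arctan ((l - k * e') / A) - arctan ((- l - k * e') / A)) \<longlongrightarrow> 0) at_top"
    if "e' > 0" for e'
    using that \<open>A > 0\<close> by real_asymp
  show ?thesis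
  proof (cases "e > 0")
    case False
    with \<open>e \<noteq> 0\<close> have "- e > 0" by simp
    moreover have "arctan ((l - k * (- e)) / A) - arctan ((- l - k * (- e)) / A)
                     = arctan ((l - k * e) / A) - arctan ((- l - k * e) / A)" for k
      using arctan_minus[of "(l - k * e) / A"] arctan_minus[of "(- l - k * e) / A"]
      by (simp add: minus_divide_left algebra_simps)
    ultimately show ?thesis
      using pos[of "- e"] by simp
  qed (use pos in simp)
qed

section \<open>Herglotz integrals of finite measures on the circle\<close>

locale circle_measure = finite_measure \<mu> for \<mu> :: "complex measure" +
  assumes sets_eq: "sets \<mu> = sets (restrict_space borel (sphere 0 1))"

definition herglotz :: "complex measure \<Rightarrow> complex \<Rightarrow> complex" where
  "herglotz \<mu> z = (\<integral>\<zeta>. (\<zeta> + z) / (\<zeta> - z) \<partial>\<mu>)"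

context circle_measure
begin

lemma space_eq: "space \<mu> = sphere 0 1"
  using sets_eq_imp_space_eq[OF sets_eq] by simp

lemma singleton_1_in_sets: "{1} \<in> sets \<mu>"
  unfolding sets_eq by (subst sets_restrict_space_iff) auto

lemma borel_measurable_continuous_on_sphere:
  "continuous_on (sphere 0 1) f \<Longrightarrow> f \<in> borel_measurable \<mu>"
  using borel_measurable_continuous_on_restrict[of "sphere 0 1" f]
  by (subst measurable_cong_sets[OF sets_eq refl])

lemma integrable_continuous_on_sphere:
  fixes f :: "complex \<Rightarrow> 'b::{banach,second_countable_topology}"
  assumes "continuous_on (sphere 0 1) f"
  shows "integrable \<mu> f"
proof -
  have "bounded (f ` sphere 0 1)"
    using compact_imp_bounded[OF compact_continuous_image[OF assms compact_sphere]] .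
  then obtain B where "\<forall>\<zeta>\<in>sphere 0 1. norm (f \<zeta>) \<le> B"
    unfolding bounded_iff by blast
  then show ?thesis
    by (intro integrable_const_bound[where B = B])
       (auto simp: space_eq borel_measurable_continuous_on_sphere[OF assms])
qed

lemma norm_integral_le_measure:
  fixes f :: "complex \<Rightarrow> 'b::{banach,second_countable_topology}"
  assumes "integrable \<mu> f" "\<And>\<zeta>. \<zeta> \<in> sphere 0 1 \<Longrightarrow> norm (f \<zeta>) \<le> B"
  shows "norm (\<integral>\<zeta>. f \<zeta> \<partial>\<mu>) \<le> B * measure \<mu> (space \<mu>)"
proof -
  have "norm (\<integral>\<zeta>. f \<zeta> \<partial>\<mu>) \<le> (\<integral>\<zeta>. norm (f \<zeta>) \<partial>\<mu>)"
    by (rule integral_norm_bound)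
  also have "\<dots> \<le> (\<integral>\<zeta>. B \<partial>\<mu>)"
    using assms by (intro integral_mono) (auto simp: space_eq)
  finally show ?thesis
    by (simp add: mult.commute)
qed

lemma integrable_herglotz_kernel:
  assumes "z \<in> ball 0 1"
  shows "integrable \<mu> (\<lambda>\<zeta>. (\<zeta> + z) / (\<zeta> - z))"
  using assms by (intro integrable_continuous_on_sphere continuous_intros) auto

lemma Re_herglotz:
  assumes "z \<in> ball 0 1"
  shows "Re (herglotz \<mu> z) = (\<integral>\<zeta>. poisson z \<zeta> \<partial>\<mu>)" and "integrable \<mu> (poisson z)"
proof -
  have Re_kernel: "\<zeta> \<in> space \<mu> \<Longrightarrow> Re ((\<zeta> + z) / (\<zeta> - z)) = poisson z \<zeta>" for \<zeta>
    by (simp add: space_eq poisson_eq_Re_herglotz_kernel)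
  have "Re (herglotz \<mu> z) = (\<integral>\<zeta>. Re ((\<zeta> + z) / (\<zeta> - z)) \<partial>\<mu>)"
    unfolding herglotz_def
    by (rule integral_Re[OF integrable_herglotz_kernel[OF assms], symmetric])
  also have "\<dots> = (\<integral>\<zeta>. poisson z \<zeta> \<partial>\<mu>)"
    using Re_kernel by (rule Bochner_Integration.integral_cong[OF refl])
  finally show "Re (herglotz \<mu> z) = (\<integral>\<zeta>. poisson z \<zeta> \<partial>\<mu>)" .
  show "integrable \<mu> (poisson z)"
    using integrable_Re[OF integrable_herglotz_kernel[OF assms]] Re_kernel
    by (simp cong: Bochner_Integration.integrable_cong)
qed

lemma herglotz_diff_quotient_bound:
  assumes z: "z \<in> ball 0 1" and y: "y \<noteq> z" "cmod (y - z) < (1 - cmod z) / 2"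
  shows "norm ((herglotz \<mu> y - herglotz \<mu> z) / (y - z) - (\<integral>\<zeta>. 2 * \<zeta> / (\<zeta> - z)^2 \<partial>\<mu>))
           \<le> 4 / (1 - cmod z)^3 * measure \<mu> (space \<mu>) * cmod (y - z)"
proof -
  have y_ball: "y \<in> ball 0 1"
    using z y norm_triangle_ineq2[of y z] by simp
  have int_D: "integrable \<mu> (\<lambda>\<zeta>. 2 * \<zeta> / (\<zeta> - z)^2)"
    using z by (intro integrable_continuous_on_sphere continuous_intros) auto
  have int_R: "integrable \<mu> (\<lambda>\<zeta>. 2 * \<zeta> * (y - z) / ((\<zeta> - y) * (\<zeta> - z)^2))"
    using z y_ball by (intro integrable_continuous_on_sphere continuous_intros) auto
  have "(herglotz \<mu> y - herglotz \<mu> z) / (y - z) - (\<integral>\<zeta>. 2 * \<zeta> / (\<zeta> - z)^2 \<partial>\<mu>)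
      = (\<integral>\<zeta>. ((\<zeta> + y) / (\<zeta> - y) - (\<zeta> + z) / (\<zeta> - z)) / (y - z) - 2 * \<zeta> / (\<zeta> - z)^2 \<partial>\<mu>)"
    unfolding herglotz_def
    using integrable_herglotz_kernel[OF y_ball] integrable_herglotz_kernel[OF z] int_D
    by (simp add: Bochner_Integration.integral_diff integral_divide_zero)
  also have "\<dots> = (\<integral>\<zeta>. 2 * \<zeta> * (y - z) / ((\<zeta> - y) * (\<zeta> - z)^2) \<partial>\<mu>)"
    using z y_ball y(1)
    by (intro Bochner_Integration.integral_cong refl herglotz_kernel_diff_quotient)
       (auto simp: space_eq)
  finally have eq: "(herglotz \<mu> y - herglotz \<mu> z) / (y - z) - (\<integral>\<zeta>. 2 * \<zeta> / (\<zeta> - z)^2 \<partial>\<mu>)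
      = (\<integral>\<zeta>. 2 * \<zeta> * (y - z) / ((\<zeta> - y) * (\<zeta> - z)^2) \<partial>\<mu>)" .
  have "norm (\<integral>\<zeta>. 2 * \<zeta> * (y - z) / ((\<zeta> - y) * (\<zeta> - z)^2) \<partial>\<mu>)
          \<le> 4 / (1 - cmod z)^3 * cmod (y - z) * measure \<mu> (space \<mu>)"
    using y by (intro norm_integral_le_measure[OF int_R] norm_herglotz_kernel_diff_quotient_le) auto
  then show ?thesis
    unfolding eq by (simp add: algebra_simps)
qed

lemma has_field_derivative_herglotz:
  assumes "z \<in> ball 0 1"
  shows "(herglotz \<mu> has_field_derivative (\<integral>\<zeta>. 2 * \<zeta> / (\<zeta> - z)^2 \<partial>\<mu>)) (at z)"
proof -
  define C where "C = 4 / (1 - cmod z)^3 * measure \<mu> (space \<mu>)"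
  have "\<forall>\<^sub>F y in at z. norm ((herglotz \<mu> y - herglotz \<mu> z) / (y - z) - (\<integral>\<zeta>. 2 * \<zeta> / (\<zeta> - z)^2 \<partial>\<mu>))
          \<le> C * cmod (y - z)" (is "\<forall>\<^sub>F y in at z. ?bound y")
  proof -
    have "?bound y" if "y \<noteq> z" "dist y z < (1 - cmod z) / 2" for y
      using herglotz_diff_quotient_bound[OF assms that(1)] that(2) by (simp add: C_def dist_norm)
    then show ?thesis
      unfolding eventually_at using assms by (intro exI[of _ "(1 - cmod z) / 2"]) auto
  qed
  moreover have "((\<lambda>y. C * cmod (y - z)) \<longlongrightarrow> 0) (at z)"
    by (auto intro!: tendsto_eq_intros)
  ultimately have "((\<lambda>y. (herglotz \<mu> y - herglotz \<mu> z) / (y - z)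
                       - (\<integral>\<zeta>. 2 * \<zeta> / (\<zeta> - z)^2 \<partial>\<mu>)) \<longlongrightarrow> 0) (at z)"
    by (rule Lim_null_comparison)
  then show ?thesis
    unfolding has_field_derivative_iff by (rule LIM_zero_cancel)
qed

lemma holomorphic_herglotz: "herglotz \<mu> holomorphic_on ball 0 1"
  using has_field_derivative_herglotz holomorphic_on_open by blast

lemma tendsto_herglotz_nontangential:
  assumes z_ball: "\<And>n. z n \<in> ball 0 1" and "z \<longlonglongrightarrow> 1"
    and stolz: "\<And>n. cmod (1 - z n) \<le> M * (1 - cmod (z n))"
  shows "(\<lambda>n. (1 - z n) * herglotz \<mu> (z n)) \<longlonglongrightarrow> 2 * complex_of_real (measure \<mu> {1})"
proof -
  define f where "f \<zeta> = complex_of_real (2 * indicator {1} \<zeta>)" for \<zeta> :: complex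
  have "(\<lambda>n. \<integral>\<zeta>. (1 - z n) * ((\<zeta> + z n) / (\<zeta> - z n)) \<partial>\<mu>) \<longlonglongrightarrow> (\<integral>\<zeta>. f \<zeta> \<partial>\<mu>)"
  proof (rule integral_dominated_convergence[where w = "\<lambda>_. 2 * M"])
    show "f \<in> borel_measurable \<mu>"
      unfolding f_def using singleton_1_in_sets by measurable
    show "(\<lambda>\<zeta>. (1 - z n) * ((\<zeta> + z n) / (\<zeta> - z n))) \<in> borel_measurable \<mu>" for n
      using z_ball[of n] by (intro borel_measurable_continuous_on_sphere continuous_intros) auto
    have "z n \<noteq> 1" for n
      using z_ball[of n] by auto
    then show "AE \<zeta> in \<mu>. (\<lambda>n. (1 - z n) * ((\<zeta> + z n) / (\<zeta> - z n))) \<longlonglongrightarrow> f \<zeta>"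
      unfolding f_def by (intro AE_I2 tendsto_herglotz_kernel_at_1 \<open>z \<longlonglongrightarrow> 1\<close>)
    show "AE \<zeta> in \<mu>. norm ((1 - z n) * ((\<zeta> + z n) / (\<zeta> - z n))) \<le> 2 * M" for n
      using z_ball[of n] stolz[of n]
      by (intro AE_I2 norm_herglotz_kernel_stolz_le) (auto simp: space_eq)
  qed simp
  moreover have "(\<integral>\<zeta>. f \<zeta> \<partial>\<mu>) = 2 * complex_of_real (measure \<mu> {1})"
    using singleton_1_in_sets by (simp add: f_def space_eq)
  moreover have "(1 - z n) * herglotz \<mu> (z n) = (\<integral>\<zeta>. (1 - z n) * ((\<zeta> + z n) / (\<zeta> - z n)) \<partial>\<mu>)" for n
    unfolding herglotz_def by (rule integral_mult_right_zero[symmetric])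
  ultimately show ?thesis
    by simp
qed

end

section \<open>Aleksandrov--Clark measures\<close>

lemma AC_measure_poisson:
  "is_AC_measure \<phi> \<alpha> \<mu> \<Longrightarrow> z \<in> ball 0 1 \<Longrightarrow>
     (\<integral>\<^sup>+\<zeta>. ennreal (poisson z \<zeta>) \<partial>\<mu>) = ennreal ((1 - (cmod (\<phi> z))^2) / (cmod (\<alpha> - \<phi> z))^2)"
  by (simp add: is_AC_measure_def)

lemma AC_measure_circle_measure:
  assumes "is_AC_measure \<phi> \<alpha> \<mu>"
  shows "circle_measure \<mu>"
proof -
  have sets: "sets \<mu> = sets (restrict_space borel (sphere 0 1))"
    using assms by (simp add: is_AC_measure_def)
  then have space: "space \<mu> = sphere 0 1"
    using sets_eq_imp_space_eq[OF sets] by simp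
  have "emeasure \<mu> (space \<mu>) = (\<integral>\<^sup>+\<zeta>. 1 \<partial>\<mu>)"
    by simp
  also have "\<dots> = (\<integral>\<^sup>+\<zeta>. ennreal (poisson 0 \<zeta>) \<partial>\<mu>)"
    by (rule nn_integral_cong) (simp add: poisson_def space)
  also have "\<dots> = ennreal ((1 - (cmod (\<phi> 0))^2) / (cmod (\<alpha> - \<phi> 0))^2)"
    using AC_measure_poisson[OF assms] by simp
  finally have "emeasure \<mu> (space \<mu>) \<noteq> \<infinity>"
    by simp
  then show ?thesis
    using sets by (intro circle_measure.intro finite_measureI circle_measure_axioms.intro)
qed

lemma Re_herglotz_AC_measure:
  assumes AC: "is_AC_measure \<phi> \<alpha> \<mu>" and "cmod \<alpha> = 1" and z: "z \<in> ball 0 1"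
    and "cmod (\<phi> z) < 1"
  shows "Re (herglotz \<mu> z) = Re ((\<alpha> + \<phi> z) / (\<alpha> - \<phi> z))"
proof -
  interpret circle_measure \<mu>
    using AC by (rule AC_measure_circle_measure)
  have P_nonneg: "0 \<le> poisson z \<zeta>" for \<zeta>
    using z by (simp add: poisson_nonneg)
  have "ennreal (Re (herglotz \<mu> z)) = (\<integral>\<^sup>+\<zeta>. ennreal (poisson z \<zeta>) \<partial>\<mu>)"
    using Re_herglotz[OF z] P_nonneg by (simp add: nn_integral_eq_integral)
  also have "\<dots> = ennreal (Re ((\<alpha> + \<phi> z) / (\<alpha> - \<phi> z)))"
    using AC_measure_poisson[OF AC z] \<open>cmod \<alpha> = 1\<close> by (simp add: Re_herglotz_kernel)
  finally show ?thesis
    using Re_herglotz[OF z] P_nonneg \<open>cmod \<alpha> = 1\<close> \<open>cmod (\<phi> z) < 1\<close>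
    by (subst (asm) ennreal_inj) (auto simp: Re_herglotz_kernel power_le_one)
qed

lemma cayley_eq_herglotz_plus_const:
  assumes AC: "is_AC_measure \<phi> \<alpha> \<mu>" and "cmod \<alpha> = 1"
    and hol: "\<phi> holomorphic_on ball 0 1" and maps: "\<phi> ` ball 0 1 \<subseteq> ball 0 1"
  shows "\<exists>c. \<forall>z\<in>ball 0 1. (\<alpha> + \<phi> z) / (\<alpha> - \<phi> z) = herglotz \<mu> z + c"
proof -
  interpret circle_measure \<mu>
    using AC by (rule AC_measure_circle_measure)
  have \<phi>_lt_1: "cmod (\<phi> z) < 1" if "z \<in> ball 0 1" for z
    using maps that by (metis image_subset_iff mem_ball_0)
  have "\<exists>c. \<forall>z\<in>ball 0 1. (\<alpha> + \<phi> z) / (\<alpha> - \<phi> z) - herglotz \<mu> z = c"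
  proof (rule holomorphic_Re_eq_0_imp_constant)
    show "(\<lambda>z. (\<alpha> + \<phi> z) / (\<alpha> - \<phi> z) - herglotz \<mu> z) holomorphic_on ball 0 1"
      using \<phi>_lt_1 \<open>cmod \<alpha> = 1\<close>
      by (intro holomorphic_intros hol holomorphic_herglotz) force
    show "Re ((\<alpha> + \<phi> w) / (\<alpha> - \<phi> w) - herglotz \<mu> w) = 0" if "w \<in> ball 0 1" for w
      using Re_herglotz_AC_measure[OF AC \<open>cmod \<alpha> = 1\<close> that \<phi>_lt_1[OF that]] by simp
  qed auto
  then show ?thesis
    by (metis add.commute diff_eq_eq)
qed

section \<open>The reproducing kernel along Stolz paths\<close>

lemma norm_comp_op_nrk_sq:
  assumes "cmod w < 1"
  shows "(cmod (comp_op \<phi> (nrk w) z))^2 = (1 - (cmod w)^2) / (cmod (1 - cnj w * \<phi> z))^2"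
  using assms by (simp add: comp_op_def nrk_def norm_divide power_divide abs_square_le_1)

lemma norm_comp_op_nrk_sq_le:
  assumes w: "cmod w < 1" and "cmod (\<phi> z) \<le> 1"
  shows "(cmod (comp_op \<phi> (nrk w) z))^2 \<le> (1 + cmod w) / (1 - cmod w)"
proof -
  have "cmod (cnj w * \<phi> z) \<le> cmod w"
    using assms mult_left_le[of "cmod (\<phi> z)" "cmod w"] by (simp add: norm_mult)
  then have "1 - cmod w \<le> cmod (1 - cnj w * \<phi> z)"
    using norm_triangle_ineq2[of 1 "cnj w * \<phi> z"] by simp
  then have "(1 - (cmod w)^2) / (cmod (1 - cnj w * \<phi> z))^2 \<le> (1 - (cmod w)^2) / (1 - cmod w)^2"
    using w by (intro frac_le power_mono) (auto simp: abs_square_le_1)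
  also have "\<dots> = (1 + cmod w) * (1 - cmod w) / ((1 - cmod w) * (1 - cmod w))"
    by (simp add: power2_eq_square algebra_simps)
  also have "\<dots> = (1 + cmod w) / (1 - cmod w)"
    using w by simp
  finally show ?thesis
    using norm_comp_op_nrk_sq[OF w] by simp
qed

lemma continuous_on_comp_op_nrk:
  assumes "continuous_on (ball 0 1) \<phi>" "\<phi> ` ball 0 1 \<subseteq> ball 0 1" "cmod w < 1"
  shows "continuous_on (ball 0 1) (comp_op \<phi> (nrk w))"
proof -
  have "cmod (cnj w * \<phi> z) < 1" if "z \<in> ball 0 1" for z
    using assms that mult_strict_mono'[of "cmod w" 1 "cmod (\<phi> z)" 1]
    by (force simp: norm_mult)
  then have "1 - cnj w * \<phi> z \<noteq> 0" if "z \<in> ball 0 1" for z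
    using that by force
  then show ?thesis
    unfolding comp_op_def nrk_def o_def using assms(1)
    by (intro continuous_intros) auto
qed

lemma continuous_on_comp_op_nrk_circle:
  assumes "continuous_on (ball 0 1) \<phi>" "\<phi> ` ball 0 1 \<subseteq> ball 0 1" "cmod w < 1"
    and "0 \<le> \<rho>" "\<rho> < 1" "continuous_on UNIV \<theta>"
  shows "continuous_on UNIV (\<lambda>t. (cmod (comp_op \<phi> (nrk w) (complex_of_real \<rho> * cis (\<theta> t))))^2)"
proof -
  have "continuous_on UNIV (\<lambda>t. complex_of_real \<rho> * cis (\<theta> t))"
    using assms(6) by (intro continuous_intros)
  moreover have "(\<lambda>t. complex_of_real \<rho> * cis (\<theta> t)) ` UNIV \<subseteq> ball 0 1"
    using assms(4,5) by (auto simp: norm_mult)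
  ultimately have "continuous_on UNIV (\<lambda>t. comp_op \<phi> (nrk w) (complex_of_real \<rho> * cis (\<theta> t)))"
    by (rule continuous_on_compose2[OF continuous_on_comp_op_nrk[OF assms(1-3)]])
  then show ?thesis
    by (intro continuous_on_power continuous_on_norm)
qed

text \<open>As \<open>r \<rightarrow> 0\<^sup>+\<close> these points tend to 1 inside a Stolz angle. The kernel in \<^const>\<open>I_int\<close>
  is centred at \<open>stolz_path 1 \<kappa> r\<close>, and after the substitution \<open>t = \<kappa> r a + r s\<close> the
  integrand is evaluated at \<open>stolz_path \<delta> (s + \<kappa> a) r\<close>.\<close>

definition stolz_path :: "real \<Rightarrow> real \<Rightarrow> real \<Rightarrow> complex" where
  "stolz_path \<delta> c r = complex_of_real (1 - \<delta> * r) * cis (c * r)"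

lemma norm_stolz_path: "\<delta> * r \<le> 1 \<Longrightarrow> cmod (stolz_path \<delta> c r) = 1 - \<delta> * r"
  unfolding stolz_path_def norm_mult norm_of_real norm_cis by simp

lemma stolz_path_in_ball: "0 < \<delta> * r \<Longrightarrow> \<delta> * r < 1 \<Longrightarrow> stolz_path \<delta> c r \<in> ball 0 1"
  by (simp add: norm_stolz_path)

lemma cnj_stolz_path: "cnj (stolz_path \<delta> c r) = stolz_path \<delta> (- c) r"
  by (simp add: stolz_path_def cis_cnj)

lemma norm_one_minus_stolz_path_le:
  assumes "0 \<le> r" "0 \<le> \<delta>"
  shows "cmod (1 - stolz_path \<delta> c r) \<le> (\<bar>c\<bar> + \<delta>) * r"
proof -
  have "1 - stolz_path \<delta> c r = (1 - cis (c * r)) + complex_of_real (\<delta> * r) * cis (c * r)"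
    by (simp add: stolz_path_def algebra_simps)
  also have "cmod \<dots> \<le> cmod (1 - cis (c * r)) + cmod (complex_of_real (\<delta> * r) * cis (c * r))"
    by (rule norm_triangle_ineq)
  also have "\<dots> \<le> \<bar>c * r\<bar> + \<delta> * r"
    using norm_one_minus_cis_le[of "c * r"] assms by (simp add: norm_mult)
  finally show ?thesis
    using assms by (simp add: abs_mult algebra_simps)
qed

lemma tendsto_stolz_path: "(stolz_path \<delta> c \<longlongrightarrow> 1) (at_right 0)"
proof -
  have "((\<lambda>r. complex_of_real (1 - \<delta> * r) * cis (c * r))
          \<longlongrightarrow> complex_of_real (1 - \<delta> * 0) * cis (c * 0)) (at_right 0)"
    by (intro tendsto_intros)
  then show ?thesis
    by (simp add: stolz_path_def[abs_def])
qed

lemma tendsto_one_minus_stolz_path_over: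
  "((\<lambda>r. (1 - stolz_path \<delta> c r) / complex_of_real r) \<longlongrightarrow> \<delta> - \<i> * c) (at_right 0)"
proof -
  define f where "f \<rho> = (1 - complex_of_real \<delta> * \<rho>) * exp (\<i> * complex_of_real c * \<rho>)" for \<rho>
  have "(f has_field_derivative \<i> * c - \<delta>) (at 0)"
    unfolding f_def by (auto intro!: derivative_eq_intros)
  then have "((\<lambda>r. - ((f (complex_of_real r) - f 0) / complex_of_real r)) \<longlongrightarrow> - (\<i> * c - \<delta>))
               (at_right 0)"
    by (intro tendsto_minus tendsto_difference_quotient_at_right)
  moreover have "f (complex_of_real r) = stolz_path \<delta> c r" for r
    by (simp add: f_def stolz_path_def cis_conv_exp mult_ac)
  ultimately show ?thesis
    by (simp add: f_def minus_divide_left)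
qed

text \<open>Solving \<open>1 - W P\<close> for the Cayley transform \<open>(1 + P) / (1 - P)\<close> of \<open>P\<close>: after
  multiplication by \<open>(1 - Z) / r\<close>, numerator and denominator both converge as \<open>r \<rightarrow> 0\<close>.\<close>

lemma divide_one_minus_mult_via_cayley:
  fixes W P Z :: complex and r :: real
  assumes "P \<noteq> 1" "Z \<noteq> 1" "r \<noteq> 0" "W * P \<noteq> 1"
  defines "H \<equiv> (1 - Z) * ((1 + P) / (1 - P))"
  shows "r / (1 - W * P) = (H + (1 - Z)) / ((1 - W) / r * H + (1 + W) * ((1 - Z) / r))"
proof -
  have nz: "1 - P \<noteq> 0" "1 - Z \<noteq> 0" "1 - W * P \<noteq> 0" "complex_of_real r \<noteq> 0"
    using assms by auto
  define Q where "Q = 2 * (1 - Z) / (1 - P)"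
  have "H + (1 - Z) = Q"
    using nz by (simp add: H_def Q_def field_simps)
  moreover have "(1 - W) / r * H + (1 + W) * ((1 - Z) / r) = (1 - W * P) * Q / r"
    using nz by (simp add: H_def Q_def field_simps)
  moreover have "Q \<noteq> 0"
    using nz by (simp add: Q_def)
  ultimately show ?thesis
    using nz by simp
qed

lemma rescaled_norm_comp_op_nrk_sq_eq:
  fixes r \<kappa> :: real
  assumes r: "0 < r" "r < 1" and "Z \<noteq> 1" and \<phi>Z: "cmod (\<phi> Z) < 1"
  defines "W \<equiv> stolz_path 1 (- \<kappa>) r" and "H \<equiv> (1 - Z) * ((1 + \<phi> Z) / (1 - \<phi> Z))"
  shows "r * (cmod (comp_op \<phi> (nrk (stolz_path 1 \<kappa> r)) Z))^2
           = (2 - r) * (cmod ((H + (1 - Z)) / ((1 - W) / r * H + (1 + W) * ((1 - Z) / r))))^2"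
proof -
  have norm_w: "cmod (stolz_path 1 \<kappa> r) = 1 - r"
    using r norm_stolz_path[of 1 r \<kappa>] by simp
  have "cmod (W * \<phi> Z) = (1 - r) * cmod (\<phi> Z)"
    using norm_w by (simp add: W_def norm_mult flip: cnj_stolz_path)
  also have "\<dots> < 1"
    using r \<phi>Z mult_left_le_one_le[of "cmod (\<phi> Z)" "1 - r"] by simp
  finally have "W * \<phi> Z \<noteq> 1" "\<phi> Z \<noteq> 1"
    using \<phi>Z by auto
  then have "r / (1 - W * \<phi> Z) = (H + (1 - Z)) / ((1 - W) / r * H + (1 + W) * ((1 - Z) / r))"
    unfolding H_def using r \<open>Z \<noteq> 1\<close> by (intro divide_one_minus_mult_via_cayley) auto
  moreover have "r * (cmod (comp_op \<phi> (nrk (stolz_path 1 \<kappa> r)) Z))^2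
                   = (2 - r) * (cmod (r / (1 - W * \<phi> Z)))^2"
    using norm_comp_op_nrk_sq[of "stolz_path 1 \<kappa> r" \<phi> Z] norm_w r
    by (simp add: W_def cnj_stolz_path norm_divide power_divide power2_eq_square field_simps)
  ultimately show ?thesis
    by simp
qed

lemma rescaled_norm_comp_op_nrk_sq_le:
  assumes "0 < r" "r < 1" "cmod (\<phi> Z) \<le> 1"
  shows "r * (cmod (comp_op \<phi> (nrk (stolz_path 1 \<kappa> r)) Z))^2 \<le> 2"
proof -
  have "cmod (stolz_path 1 \<kappa> r) = 1 - r"
    using assms norm_stolz_path[of 1 r \<kappa>] by simp
  then have "r * (cmod (comp_op \<phi> (nrk (stolz_path 1 \<kappa> r)) Z))^2 \<le> r * ((2 - r) / r)"
    using norm_comp_op_nrk_sq_le[of "stolz_path 1 \<kappa> r" \<phi> Z] assms by (intro mult_left_mono) auto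
  then show ?thesis
    using assms by simp
qed

lemma norm_sq_kernel_limit:
  fixes b \<delta> \<kappa> c :: real
  assumes "0 < b + \<delta>"
  defines "L \<equiv> (1 + \<i> * \<kappa>) * (2 * complex_of_real b) + 2 * (\<delta> - \<i> * c)"
  shows "L \<noteq> 0"
    and "2 * (cmod (2 * complex_of_real b / L))^2 = 2 * b^2 / ((b + \<delta>)^2 + (\<kappa> * b - c)^2)"
proof -
  have "Re L = 2 * (b + \<delta>)"
    by (simp add: L_def)
  with assms show "L \<noteq> 0"
    by (metis mult_pos_pos zero_complex.sel(1) zero_less_numeral less_irrefl)
  define X where "X = (b + \<delta>)^2 + (\<kappa> * b - c)^2"
  have "X > 0"
    unfolding X_def using assms by (intro add_pos_nonneg) auto
  moreover have "(cmod L)^2 = 4 * X"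
    unfolding L_def X_def cmod_power2 by (simp add: power2_eq_square algebra_simps)
  ultimately show "2 * (cmod (2 * complex_of_real b / L))^2 = 2 * b^2 / ((b + \<delta>)^2 + (\<kappa> * b - c)^2)"
    unfolding X_def[symmetric] by (simp add: norm_divide power_divide field_simps)
qed

locale clark_measure =
  fixes \<phi> :: "complex \<Rightarrow> complex" and \<mu> :: "complex measure"
  assumes holomorphic: "\<phi> holomorphic_on ball 0 1"
    and maps_ball: "\<phi> ` ball 0 1 \<subseteq> ball 0 1"
    and AC_measure: "is_AC_measure \<phi> 1 \<mu>"
begin

sublocale circle_measure \<mu>
  using AC_measure by (rule AC_measure_circle_measure)

lemma norm_\<phi>_less_1: "z \<in> ball 0 1 \<Longrightarrow> cmod (\<phi> z) < 1"
  using maps_ball by (metis image_subset_iff mem_ball_0)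

lemma tendsto_cayley_nontangential:
  assumes z_ball: "\<And>n. z n \<in> ball 0 1" and "z \<longlonglongrightarrow> 1"
    and "\<And>n. cmod (1 - z n) \<le> M * (1 - cmod (z n))"
  shows "(\<lambda>n. (1 - z n) * ((1 + \<phi> (z n)) / (1 - \<phi> (z n))))
           \<longlonglongrightarrow> 2 * complex_of_real (measure \<mu> {1})"
proof -
  obtain c where c: "\<And>z. z \<in> ball 0 1 \<Longrightarrow> (1 + \<phi> z) / (1 - \<phi> z) = herglotz \<mu> z + c"
    using cayley_eq_herglotz_plus_const[OF AC_measure _ holomorphic maps_ball] by auto
  have "(\<lambda>n. (1 - z n) * herglotz \<mu> (z n) + (1 - z n) * c)
          \<longlonglongrightarrow> 2 * complex_of_real (measure \<mu> {1}) + (1 - 1) * c"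
    by (rule tendsto_add[OF tendsto_herglotz_nontangential[OF assms]])
       (intro tendsto_intros \<open>z \<longlonglongrightarrow> 1\<close>)
  moreover have "(1 - z n) * ((1 + \<phi> (z n)) / (1 - \<phi> (z n)))
                   = (1 - z n) * herglotz \<mu> (z n) + (1 - z n) * c" for n
    using c[OF z_ball] by (simp add: distrib_left)
  ultimately show ?thesis
    by simp
qed

lemma tendsto_cayley_stolz_path:
  assumes "\<delta> > 0"
  shows "((\<lambda>r. (1 - stolz_path \<delta> c r) * ((1 + \<phi> (stolz_path \<delta> c r)) / (1 - \<phi> (stolz_path \<delta> c r))))
           \<longlongrightarrow> 2 * complex_of_real (measure \<mu> {1})) (at_right 0)"
proof (rule tendsto_at_right_sequentially[of 0 "1 / \<delta>"])
  fix S :: "nat \<Rightarrow> real"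
  assume S_pos: "\<And>n. 0 < S n" and S_less: "\<And>n. S n < 1 / \<delta>" and "S \<longlonglongrightarrow> 0"
  have \<delta>S: "0 < \<delta> * S n" "\<delta> * S n < 1" for n
    using S_pos[of n] S_less[of n] assms by (auto simp: field_simps)
  have lim: "(\<lambda>n. stolz_path \<delta> c (S n)) \<longlonglongrightarrow> 1"
    using filterlim_at_right_sequentially[OF S_pos \<open>S \<longlonglongrightarrow> 0\<close>]
    by (rule filterlim_compose[OF tendsto_stolz_path])
  have bound: "cmod (1 - stolz_path \<delta> c (S n))
                   \<le> (\<bar>c\<bar> + \<delta>) / \<delta> * (1 - cmod (stolz_path \<delta> c (S n)))" for n
    using norm_one_minus_stolz_path_le[of "S n" \<delta> c] S_pos[of n] \<delta>S[of n] assms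
    by (simp add: norm_stolz_path)
  show "(\<lambda>n. (1 - stolz_path \<delta> c (S n)) *
                     ((1 + \<phi> (stolz_path \<delta> c (S n))) / (1 - \<phi> (stolz_path \<delta> c (S n)))))
                     \<longlonglongrightarrow> 2 * complex_of_real (measure \<mu> {1})"
    using stolz_path_in_ball[OF \<delta>S] by (rule tendsto_cayley_nontangential[OF _ lim bound])
qed (use assms in simp)

lemma tendsto_kernel_quotient:
  fixes \<delta> \<kappa> c :: real and Z W H :: "real \<Rightarrow> complex" and b :: complex
  assumes "\<delta> > 0"
  defines "Z \<equiv> stolz_path \<delta> c" and "W \<equiv> stolz_path 1 (- \<kappa>)"
    and "H \<equiv> \<lambda>r::real. (1 - Z r) * ((1 + \<phi> (Z r)) / (1 - \<phi> (Z r)))"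
    and "b \<equiv> complex_of_real (measure \<mu> {1})"
  shows "((\<lambda>r::real. (H r + (1 - Z r)) / ((1 - W r) / r * H r + (1 + W r) * ((1 - Z r) / r)))
           \<longlongrightarrow> 2 * b / ((1 + \<i> * \<kappa>) * (2 * b) + 2 * (\<delta> - \<i> * c))) (at_right 0)"
proof -
  have "0 < measure \<mu> {1} + \<delta>"
    by (rule add_nonneg_pos[OF measure_nonneg \<open>\<delta> > 0\<close>])
  note L_nonzero = norm_sq_kernel_limit(1)[OF this, of \<kappa> c, folded b_def]
  have lim_H: "(H \<longlongrightarrow> 2 * b) (at_right 0)"
    unfolding H_def Z_def b_def by (rule tendsto_cayley_stolz_path[OF assms(1)])
  have lim_W: "((\<lambda>r. (1 - W r) / r) \<longlongrightarrow> 1 + \<i> * \<kappa>) (at_right 0)"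
    using tendsto_one_minus_stolz_path_over[of 1 "- \<kappa>"] by (simp add: W_def)
  have lim_Z: "((\<lambda>r. (1 - Z r) / r) \<longlongrightarrow> \<delta> - \<i> * c) (at_right 0)"
    unfolding Z_def by (rule tendsto_one_minus_stolz_path_over)
  have Z_1: "(Z \<longlongrightarrow> 1) (at_right 0)" and W_1: "(W \<longlongrightarrow> 1) (at_right 0)"
    unfolding Z_def W_def by (rule tendsto_stolz_path)+
  have "((\<lambda>r. (1 - W r) / r * H r + (1 + W r) * ((1 - Z r) / r))
          \<longlongrightarrow> (1 + \<i> * \<kappa>) * (2 * b) + 2 * (\<delta> - \<i> * c)) (at_right 0)"
    using tendsto_add[OF tendsto_mult[OF lim_W lim_H]
                         tendsto_mult[OF tendsto_add[OF tendsto_const[of 1] W_1] lim_Z]]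
    by simp
  then show ?thesis
    using tendsto_add[OF lim_H tendsto_diff[OF tendsto_const[of 1] Z_1]] L_nonzero
    by (auto dest: tendsto_divide)
qed

lemma tendsto_rescaled_kernel:
  assumes "\<delta> > 0"
  shows "((\<lambda>r. r * (cmod (comp_op \<phi> (nrk (stolz_path 1 \<kappa> r)) (stolz_path \<delta> c r)))^2)
           \<longlongrightarrow> 2 * (measure \<mu> {1})^2 / ((measure \<mu> {1} + \<delta>)^2 + (\<kappa> * measure \<mu> {1} - c)^2))
         (at_right 0)"
proof -
  define q where "q r = (((1 - stolz_path \<delta> c r) * ((1 + \<phi> (stolz_path \<delta> c r)) /
      (1 - \<phi> (stolz_path \<delta> c r))) + (1 - stolz_path \<delta> c r)) / ((1 - stolz_path 1 (- \<kappa>) r) / r *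
      ((1 - stolz_path \<delta> c r) * ((1 + \<phi> (stolz_path \<delta> c r)) / (1 - \<phi> (stolz_path \<delta> c r)))) +
      (1 + stolz_path 1 (- \<kappa>) r) * ((1 - stolz_path \<delta> c r) / r)))" for r :: real
  define Q where "Q r = (2 - r) * (cmod (q r))^2" for r :: real
  have "0 < measure \<mu> {1} + \<delta>"
    by (rule add_nonneg_pos[OF measure_nonneg \<open>\<delta> > 0\<close>])
  note kernel_limit = norm_sq_kernel_limit(2)[OF this, of \<kappa> c]
  have "(q \<longlongrightarrow> 2 * complex_of_real (measure \<mu> {1}) /
           ((1 + \<i> * \<kappa>) * (2 * complex_of_real (measure \<mu> {1})) + 2 * (\<delta> - \<i> * c))) (at_right 0)"
    unfolding q_def by (rule tendsto_kernel_quotient[OF assms])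
  then have "(Q \<longlongrightarrow> (2 - 0) * (cmod (2 * complex_of_real (measure \<mu> {1}) /
           ((1 + \<i> * \<kappa>) * (2 * complex_of_real (measure \<mu> {1})) + 2 * (\<delta> - \<i> * c))))^2)
           (at_right 0)"
    unfolding Q_def by (intro tendsto_intros)
  then have "(Q \<longlongrightarrow> 2 * (measure \<mu> {1})^2 / ((measure \<mu> {1} + \<delta>)^2 + (\<kappa> * measure \<mu> {1} - c)^2))
               (at_right 0)"
    using kernel_limit by simp
  moreover have "\<forall>\<^sub>F r in at_right 0.
      Q r = r * (cmod (comp_op \<phi> (nrk (stolz_path 1 \<kappa> r)) (stolz_path \<delta> c r)))^2"
  proof (rule eventually_at_rightI[of 0 "min 1 (1 / \<delta>)"])
    fix r :: real assume "r \<in> {0<..<min 1 (1 / \<delta>)}"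
    then have r: "0 < r" "r < 1" "0 < \<delta> * r" "\<delta> * r < 1"
      using assms by (auto simp: field_simps)
    then have "stolz_path \<delta> c r \<in> ball 0 1"
      by (intro stolz_path_in_ball)
    then have "stolz_path \<delta> c r \<noteq> 1" "cmod (\<phi> (stolz_path \<delta> c r)) < 1"
      using norm_\<phi>_less_1 by auto
    then show "Q r = r * (cmod (comp_op \<phi> (nrk (stolz_path 1 \<kappa> r)) (stolz_path \<delta> c r)))^2"
      unfolding Q_def q_def by (rule rescaled_norm_comp_op_nrk_sq_eq[OF r(1,2), symmetric])
  qed (use assms in simp)
  ultimately show ?thesis
    by (simp add: tendsto_cong)
qed

lemma continuous_on_rescaled_kernel:
  assumes "0 < r" "r < 1" "0 < \<delta> * r" "\<delta> * r < 1"
  shows "continuous_on UNIV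
           (\<lambda>s. r * (cmod (comp_op \<phi> (nrk (stolz_path 1 \<kappa> r)) (stolz_path \<delta> (s + \<kappa> * a) r)))^2)"
proof -
  have "continuous_on UNIV (\<lambda>s. (cmod (comp_op \<phi> (nrk (stolz_path 1 \<kappa> r))
          (complex_of_real (1 - \<delta> * r) * cis ((s + \<kappa> * a) * r))))^2)"
    using assms norm_stolz_path[of 1 r \<kappa>]
    by (intro continuous_on_comp_op_nrk_circle holomorphic_on_imp_continuous_on[OF holomorphic]
          maps_ball continuous_intros) auto
  then show ?thesis
    unfolding stolz_path_def[of \<delta>] by (rule continuous_on_mult[OF continuous_on_const])
qed

lemma I_int_eq_rescaled:
  assumes "0 < r" "r < 1" "0 < \<delta> * r" "\<delta> * r < 1" "l > 0"
  shows "I_int \<phi> a \<delta> \<kappa> l r = 1 / (2 * pi) * integral {-l..l}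
           (\<lambda>s. r * (cmod (comp_op \<phi> (nrk (stolz_path 1 \<kappa> r)) (stolz_path \<delta> (s + \<kappa> * a) r)))^2)"
proof -
  define q where
    "q t = (cmod (comp_op \<phi> (nrk (stolz_path 1 \<kappa> r)) (complex_of_real (1 - \<delta> * r) * cis t)))^2" for t
  have "stolz_path 1 \<kappa> r = complex_of_real (1 - r) * cis (\<kappa> * r)"
    by (simp add: stolz_path_def)
  then have I_q:
      "I_int \<phi> a \<delta> \<kappa> l r = 1 / (2 * pi) * integral {\<kappa> * r * a - l * r .. \<kappa> * r * a + l * r} q"
    unfolding I_int_def q_def by simp
  have "cmod (stolz_path 1 \<kappa> r) < 1"
    using norm_stolz_path[of 1 r \<kappa>] assms by simp
  then have q_cont: "continuous_on UNIV q"
    unfolding q_def using assms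
    by (intro continuous_on_comp_op_nrk_circle[where \<theta> = "\<lambda>t. t"] continuous_on_id
          holomorphic_on_imp_continuous_on[OF holomorphic] maps_ball) auto
  have "integral {\<kappa> * r * a - l * r .. \<kappa> * r * a + l * r} q
               = r * integral {-l..l} (\<lambda>s. q (r * s + \<kappa> * r * a))"
    using assms by (intro integral_rescale_interval[OF continuous_on_subset[OF q_cont subset_UNIV]])
  also have "\<dots> = integral {-l..l}
           (\<lambda>s. r * (cmod (comp_op \<phi> (nrk (stolz_path 1 \<kappa> r)) (stolz_path \<delta> (s + \<kappa> * a) r)))^2)"
  proof -
    have "(s + \<kappa> * a) * r = r * s + \<kappa> * r * a" for s
      by (simp add: algebra_simps)
    then show ?thesis
      by (simp add: q_def stolz_path_def)
  qed
  finally show ?thesis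
    unfolding I_q by simp
qed

lemma tendsto_I_int:
  assumes "\<delta> > 0" "l > 0"
  shows "((\<lambda>r. I_int \<phi> a \<delta> \<kappa> l r) \<longlongrightarrow> 1 / (2 * pi) * integral {-l..l}
           (\<lambda>s. 2 * (measure \<mu> {1})^2 / ((measure \<mu> {1} + \<delta>)^2 + (\<kappa> * (measure \<mu> {1} - a) - s)^2)))
         (at_right 0)" (is "(_ \<longlongrightarrow> 1 / (2 * pi) * integral {-l..l} ?g) _")
proof (rule tendsto_at_right_sequentially[of 0 "min 1 (1 / \<delta>)"])
  fix S :: "nat \<Rightarrow> real"
  assume S_pos: "\<And>n. 0 < S n" and S_less: "\<And>n. S n < min 1 (1 / \<delta>)" and "S \<longlonglongrightarrow> 0"
  have S: "0 < S n" "S n < 1" "0 < \<delta> * S n" "\<delta> * S n < 1" for n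
    using S_pos[of n] S_less[of n] assms by (auto simp: field_simps)
  define h where
    "h n s = S n * (cmod (comp_op \<phi> (nrk (stolz_path 1 \<kappa> (S n))) (stolz_path \<delta> (s + \<kappa> * a) (S n))))^2"
    for n s
  have "(\<lambda>n. integral {-l..l} (h n)) \<longlonglongrightarrow> integral {-l..l} ?g"
  proof (rule dominated_convergence(2)[where h = "\<lambda>_. 2"])
    show "h n integrable_on {-l..l}" for n
      unfolding h_def[abs_def]
      using continuous_on_subset[OF continuous_on_rescaled_kernel[OF S] subset_UNIV]
      by (rule integrable_continuous_real)
    show "norm (h n s) \<le> 2" for n s
    proof -
      have \<phi>_le_1: "cmod (\<phi> (stolz_path \<delta> (s + \<kappa> * a) (S n))) \<le> 1"
        using norm_\<phi>_less_1[OF stolz_path_in_ball[OF S(3,4)]] by (rule less_imp_le)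
      show ?thesis
        using rescaled_norm_comp_op_nrk_sq_le[where \<phi> = \<phi> and \<kappa> = \<kappa>, OF S(1,2)[of n] \<phi>_le_1] S[of n]
        by (simp add: h_def)
    qed
    show "(\<lambda>n. h n s) \<longlonglongrightarrow> ?g s" for s
      using filterlim_compose[OF tendsto_rescaled_kernel[OF \<open>\<delta> > 0\<close>, of \<kappa> "s + \<kappa> * a"]
                                 filterlim_at_right_sequentially[OF S_pos \<open>S \<longlonglongrightarrow> 0\<close>]]
      by (simp add: h_def algebra_simps)
  qed auto
  then have "(\<lambda>n. 1 / (2 * pi) * integral {-l..l} (h n)) \<longlonglongrightarrow> 1 / (2 * pi) * integral {-l..l} ?g"
    by (rule tendsto_mult_left)
  moreover have "I_int \<phi> a \<delta> \<kappa> l (S n) = 1 / (2 * pi) * integral {-l..l} (h n)" for n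
    unfolding h_def by (rule I_int_eq_rescaled[OF S \<open>l > 0\<close>])
  ultimately show "(\<lambda>n. I_int \<phi> a \<delta> \<kappa> l (S n)) \<longlonglongrightarrow> 1 / (2 * pi) * integral {-l..l} ?g"
    by simp
qed (use assms in simp)

end

theorem lemma3p3:
  fixes \<phi> :: "complex \<Rightarrow> complex" and a :: real and \<mu> :: "complex measure"
  assumes hol: "\<phi> holomorphic_on ball 0 1"
    and maps: "\<phi> ` ball 0 1 \<subseteq> ball 0 1"
    and a_pos: "a > 0"
    and tau: "is_AC_measure \<phi> 1 \<mu>"
  shows "(measure \<mu> {1} = a \<longrightarrow>
           (\<exists>c :: real \<Rightarrow> real \<Rightarrow> real.
              (\<forall>\<delta>>0. \<forall>\<kappa>>0. \<forall>l>0.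
                 ((\<lambda>r. I_int \<phi> a \<delta> \<kappa> l r) \<longlongrightarrow> a * c \<delta> l / (1 + \<delta> / a)) (at_right 0)) \<and>
              (\<forall>\<delta>>0. \<forall>l>0. 0 < c \<delta> l \<and> c \<delta> l < 1) \<and>
              (\<forall>\<delta>>0. ((\<lambda>l. c \<delta> l) \<longlongrightarrow> 1) at_top)))
       \<and> (measure \<mu> {1} \<noteq> a \<longrightarrow>
           (\<exists>\<epsilon> :: real \<Rightarrow> real \<Rightarrow> real \<Rightarrow> real.
              (\<forall>\<delta>>0. \<forall>\<kappa>>0. \<forall>l>0.
                 ((\<lambda>r. I_int \<phi> a \<delta> \<kappa> l r) \<longlongrightarrow> \<epsilon> \<delta> \<kappa> l) (at_right 0)) \<and>
              (\<forall>\<delta>>0. \<forall>l>0. ((\<lambda>\<kappa>. \<epsilon> \<delta> \<kappa> l) \<longlongrightarrow> 0) at_top)))"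
proof -
  interpret clark_measure \<phi> \<mu>
    using hol maps tau by unfold_locales
  define b where "b = measure \<mu> {1}"
  define \<epsilon> where "\<epsilon> \<delta> \<kappa> l = 1 / (2 * pi) * (2 * b^2 / (b + \<delta>) *
      (arctan ((l - \<kappa> * (b - a)) / (b + \<delta>)) - arctan ((- l - \<kappa> * (b - a)) / (b + \<delta>))))" for \<delta> \<kappa> l
  have b_\<delta>: "b + \<delta> > 0" if "\<delta> > 0" for \<delta>
    using add_nonneg_pos[OF measure_nonneg[of \<mu> "{1}"] that] by (simp add: b_def)
  have lim: "((\<lambda>r. I_int \<phi> a \<delta> \<kappa> l r) \<longlongrightarrow> \<epsilon> \<delta> \<kappa> l) (at_right 0)" if "\<delta> > 0" "l > 0" for \<delta> \<kappa> l
    using tendsto_I_int[OF that, of a \<kappa>, folded b_def]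
    unfolding integral_Lorentzian[OF b_\<delta>[OF that(1)] that(2)] \<epsilon>_def .
  define c where "c \<delta> l = 2 / pi * arctan (l / (a + \<delta>))" for \<delta> l
  have "((\<lambda>r. I_int \<phi> a \<delta> \<kappa> l r) \<longlongrightarrow> a * c \<delta> l / (1 + \<delta> / a)) (at_right 0)"
    if "measure \<mu> {1} = a" "\<delta> > 0" "l > 0" for \<delta> \<kappa> l
    using lim[OF that(2,3), of \<kappa>] that a_pos
    by (simp add: \<epsilon>_def c_def b_def arctan_minus field_simps power2_eq_square)
  moreover have "0 < c \<delta> l \<and> c \<delta> l < 1" if "\<delta> > 0" "l > 0" for \<delta> l
    using that a_pos arctan_ubound[of "l / (a + \<delta>)"]
    by (simp add: c_def zero_less_arctan_iff field_simps)
  moreover have "((\<lambda>l. c \<delta> l) \<longlongrightarrow> 1) at_top" if "\<delta> > 0" for \<delta>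
    unfolding c_def using that a_pos by real_asymp
  moreover have "((\<lambda>\<kappa>. \<epsilon> \<delta> \<kappa> l) \<longlongrightarrow> 0) at_top" if "measure \<mu> {1} \<noteq> a" "\<delta> > 0" for \<delta> l
    unfolding \<epsilon>_def using that
    by (intro tendsto_mult_right_zero tendsto_arctan_window_0 b_\<delta>) (simp_all add: b_def)
  ultimately show ?thesis
    using lim by (intro conjI impI exI[of _ c] exI[of _ \<epsilon>]) auto
qed

end
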